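(* Let $f,g:\mathbb{R}^n\to[0,+\infty)$ and $h_1,h_2:\mathbb{R}^n\to\mathbb{R}$, let $C\subseteq\mathbb{R}^n$ be closed and convex, $\Omega:=\{x:g(x)\neq0\}$, $C\cap\Omega\neq\emptyset$, and assume: $f$ is convex; $g$ is differentiable with locally Lipschitz gradient; $h_1$ is differentiable with locally Lipschitz gradient; $h_2$ is convex. Let $F$, $H$ and Algorithm 1 be as in the context, with $x^0\in\mathrm{dom}F$, and assume $\mathcal{X}_0:=\{x\in\mathrm{dom}F:F(x)\le F(x^0)\}$ is compact. Let $\{(x^k,z^k,c_k):k\in\mathbb{N}\}$ be generated by Algorithm 1. Then: (i) $\{(x^k,z^k,c_k):k\in\mathbb{N}\}$ is bounded; (ii) $\lim_{k\to\infty}F(x^k)$ exists; (iii) $\lim_{k\to\infty}\|x^{k+1}-x^k\|_2=0$.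
   Context: $F(x)=f^2(x)/g(x)+h_1(x)-h_2(x)$ if $x\in\Omega\cap C$, $F(x)=+\infty$ otherwise. $\iota_C$ is the indicator of $C$, $h_2^\star$ the convex conjugate of $h_2$, $\partial h_2$ the convex subdifferential, $\mathrm{prox}_\varphi(y)=\arg\min_x\{\varphi(x)+\frac12\|x-y\|_2^2\}$. $H(x,z,c)=2cf(x)+\iota_C(x)-c^2g(x)+h_1(x)+h_2^\star(z)-\langle x,z\rangle$. Algorithm 1: given $x^0\in\mathrm{dom}F$, $0<\underline{\alpha}<\overline{\alpha}$, $\sigma>0$, $0<r<1$, for $k=0,1,2,\dots$: (Step 1) compute $c_k=f(x^k)/g(x^k)$, choose $z^k\in\partial h_2(x^k)$, set $\alpha:=\widetilde{\alpha}_k\in[\underline{\alpha},\overline{\alpha}]$; (Step 2) compute $\widehat{x}^k\in\mathrm{prox}_{2\alpha c_kf+\iota_C}\big(x^k-\alpha(\nabla h_1(x^k)-c_k^2\nabla g(x^k)-z^k)\big)$; if $\widehat{x}^k\in\Omega$ and $H(\widehat{x}^k,z^k,f(\widehat{x}^k)/g(\widehat{x}^k))+\frac{\sigma}{2}\|\widehat{x}^k-x^k\|_2^2\le F(x^k)$, set $x^{k+1}=\widehat{x}^k$, $\alpha_k:=\alpha$ and go to the next $k$; otherwise set $\alpha:=r\alpha$ and repeat Step 2. *)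

theory Defs
  imports "HOL-Analysis.Analysis" "HOL-Library.Extended_Real"
begin

definition Omega :: "('a \<Rightarrow> real) \<Rightarrow> 'a set" where
  "Omega g = {x. g x \<noteq> 0}"

definition Fobj :: "('a \<Rightarrow> real) \<Rightarrow> ('a \<Rightarrow> real) \<Rightarrow> ('a \<Rightarrow> real) \<Rightarrow> ('a \<Rightarrow> real)
    \<Rightarrow> 'a set \<Rightarrow> 'a \<Rightarrow> ereal" where
  "Fobj f g h1 h2 C x =
     (if x \<in> Omega g \<inter> C then ereal ((f x)\<^sup>2 / g x + h1 x - h2 x) else \<infinity>)"

definition domF :: "('a \<Rightarrow> real) \<Rightarrow> ('a \<Rightarrow> real) \<Rightarrow> ('a \<Rightarrow> real) \<Rightarrow> ('a \<Rightarrow> real)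
    \<Rightarrow> 'a set \<Rightarrow> 'a set" where
  "domF f g h1 h2 C = {x. Fobj f g h1 h2 C x < \<infinity>}"

definition indicator_ereal :: "'a set \<Rightarrow> 'a \<Rightarrow> ereal" where
  "indicator_ereal C x = (if x \<in> C then 0 else \<infinity>)"

definition conjugate :: "('a::real_inner \<Rightarrow> real) \<Rightarrow> 'a \<Rightarrow> ereal" where
  "conjugate h z = (SUP x. ereal (inner x z - h x))"

definition subdiff :: "('a::real_inner \<Rightarrow> real) \<Rightarrow> 'a \<Rightarrow> 'a set" where
  "subdiff h x = {z. \<forall>y. h y \<ge> h x + inner z (y - x)}"

definition prox :: "('a::real_normed_vector \<Rightarrow> ereal) \<Rightarrow> 'a \<Rightarrow> 'a set" where
  "prox \<phi> y = {x. \<forall>u. \<phi> x + ereal ((norm (x - y))\<^sup>2 / 2) \<le> \<phi> u + ereal ((norm (u - y))\<^sup>2 / 2)}"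

definition Hfun :: "('a::real_inner \<Rightarrow> real) \<Rightarrow> ('a \<Rightarrow> real) \<Rightarrow> ('a \<Rightarrow> real) \<Rightarrow> ('a \<Rightarrow> real)
    \<Rightarrow> 'a set \<Rightarrow> 'a \<Rightarrow> 'a \<Rightarrow> real \<Rightarrow> ereal" where
  "Hfun f g h1 h2 C x z c =
     ereal (2 * c * f x) + indicator_ereal C x + ereal (- (c\<^sup>2 * g x)) + ereal (h1 x)
     + conjugate h2 z + ereal (- inner x z)"

text \<open>Acceptance test of the line search in Step 2 of Algorithm 1.\<close>
definition accept :: "('a::real_inner \<Rightarrow> real) \<Rightarrow> ('a \<Rightarrow> real) \<Rightarrow> ('a \<Rightarrow> real) \<Rightarrow> ('a \<Rightarrow> real)
    \<Rightarrow> 'a set \<Rightarrow> real \<Rightarrow> 'a \<Rightarrow> 'a \<Rightarrow> 'a \<Rightarrow> bool" where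
  "accept f g h1 h2 C \<sigma> xk zk xh \<longleftrightarrow>
     xh \<in> Omega g \<and>
     Hfun f g h1 h2 C xh zk (f xh / g xh) + ereal (\<sigma> / 2 * (norm (xh - xk))\<^sup>2)
       \<le> Fobj f g h1 h2 C xk"

definition trial :: "('a::real_inner \<Rightarrow> real) \<Rightarrow> 'a set \<Rightarrow> ('a \<Rightarrow> 'a) \<Rightarrow> ('a \<Rightarrow> 'a)
    \<Rightarrow> real \<Rightarrow> 'a \<Rightarrow> 'a \<Rightarrow> real \<Rightarrow> 'a set" where
  "trial f C gh1 gg c xk zk \<alpha> =
     prox (\<lambda>x. ereal (2 * \<alpha> * c * f x) + indicator_ereal C x)
          (xk - \<alpha> *\<^sub>R (gh1 xk - c\<^sup>2 *\<^sub>R gg xk - zk))"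

definition loc_lipschitz :: "('a::metric_space \<Rightarrow> 'b::metric_space) \<Rightarrow> bool" where
  "loc_lipschitz G \<longleftrightarrow> (\<forall>x. \<exists>e>0. \<exists>L. \<forall>y\<in>ball x e. \<forall>y'\<in>ball x e. dist (G y) (G y') \<le> L * dist y y')"

end

theory Submission imports Defs begin

text \<open>
  Only the acceptance test of the line search matters. At \<open>c = f(x)/g(x)\<close> the terms
  \<open>2 c f(x) - c\<^sup>2 g(x)\<close> equal \<open>f(x)\<^sup>2/g(x)\<close>, and \<open>h\<^sub>2\<^sup>*(z) - \<langle>x,z\<rangle> \<ge> -h\<^sub>2(x)\<close> by Fenchel-Young,
  so \<open>H(x,z,f(x)/g(x)) \<ge> F(x)\<close> and every accepted step decreases \<open>F\<close> by at least
  \<open>\<sigma>/2 \<parallel>x\<^sup>k\<^sup>+\<^sup>1 - x\<^sup>k\<parallel>\<^sup>2\<close>. The iterates therefore stay in the compact sublevel set \<open>X\<^sub>0\<close>, on which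
  \<open>F\<close> is finite and continuous: \<open>F(x\<^sup>k)\<close> decreases and is bounded below, and the squared steps are
  dominated by its successive differences. Boundedness of \<open>z\<^sup>k\<close> holds because subgradients of a
  finite convex function are bounded on bounded sets, and that of \<open>c\<^sub>k\<close> because \<open>f/g\<close> is continuous
  on \<open>X\<^sub>0 \<subseteq> \<Omega>\<close>.
\<close>

lemma fenchel_young: "ereal (inner x z - h x) \<le> conjugate h z"
  unfolding conjugate_def by (rule SUP_upper2[of x]) (auto simp: inner_commute)

lemma Fobj_le_Hfun:
  assumes "x \<in> Omega g"
  shows "Fobj f g h1 h2 C x \<le> Hfun f g h1 h2 C x z (f x / g x)"
proof (cases "x \<in> C")
  case False
  have "conjugate h2 z \<noteq> -\<infinity>"
    using fenchel_young[of x z h2] by auto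
  with False show ?thesis
    by (simp add: Hfun_def indicator_ereal_def)
next
  case True
  define c where "c = f x / g x"
  have "2 * c * f x - c\<^sup>2 * g x = (f x)\<^sup>2 / g x"
    using assms by (simp add: c_def Omega_def field_simps power2_eq_square)
  then have "Fobj f g h1 h2 C x
      = ereal (2 * c * f x) + 0 + ereal (- (c\<^sup>2 * g x)) + ereal (h1 x)
        + ereal (inner x z - h2 x) + ereal (- inner x z)"
    using assms True by (simp add: Fobj_def)
  also have "\<dots> \<le> Hfun f g h1 h2 C x z c"
    unfolding Hfun_def using True
    by (intro add_mono order_refl fenchel_young) (simp add: indicator_ereal_def)
  finally show ?thesis
    by (simp add: c_def)
qed

lemma accept_imp_sufficient_decrease:
  assumes "accept f g h1 h2 C \<sigma> xk zk xh"
  shows "Fobj f g h1 h2 C xh + ereal (\<sigma> / 2 * (norm (xh - xk))\<^sup>2) \<le> Fobj f g h1 h2 C xk"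
  using assms Fobj_le_Hfun[of xh g f h1 h2 C zk] unfolding accept_def
  by (meson add_right_mono order_trans)

definition Fval :: "('a \<Rightarrow> real) \<Rightarrow> ('a \<Rightarrow> real) \<Rightarrow> ('a \<Rightarrow> real) \<Rightarrow> ('a \<Rightarrow> real) \<Rightarrow> 'a \<Rightarrow> real"
  where "Fval f g h1 h2 x = (f x)\<^sup>2 / g x + h1 x - h2 x"

lemma domF_eq: "domF f g h1 h2 C = Omega g \<inter> C"
  by (auto simp: domF_def Fobj_def)

lemma Fobj_eq_Fval: "x \<in> domF f g h1 h2 C \<Longrightarrow> Fobj f g h1 h2 C x = ereal (Fval f g h1 h2 x)"
  by (simp add: domF_eq Fobj_def Fval_def)

lemma bounded_Fval_image:
  assumes "compact K" "K \<subseteq> domF f g h1 h2 C"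
    and "continuous_on K f" "continuous_on K g" "continuous_on K h1" "continuous_on K h2"
  shows "bounded (Fval f g h1 h2 ` K)"
  unfolding Fval_def using assms
  by (auto simp: domF_eq Omega_def intro!: compact_imp_bounded compact_continuous_image continuous_intros)

lemma accepted_iterates_in_sublevel:
  assumes "\<And>k. accept f g h1 h2 C \<sigma> (x k) (z k) (x (Suc k))" and "\<sigma> \<ge> 0"
    and "x 0 \<in> domF f g h1 h2 C"
  shows "x k \<in> {y \<in> domF f g h1 h2 C. Fobj f g h1 h2 C y \<le> Fobj f g h1 h2 C (x 0)}"
proof -
  have "Fobj f g h1 h2 C (x (Suc k)) \<le> Fobj f g h1 h2 C (x k)" for k
  proof -
    have "Fobj f g h1 h2 C (x (Suc k))
        \<le> Fobj f g h1 h2 C (x (Suc k)) + ereal (\<sigma> / 2 * (norm (x (Suc k) - x k))\<^sup>2)"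
      using \<open>\<sigma> \<ge> 0\<close> by (simp add: add_increasing2)
    also have "\<dots> \<le> Fobj f g h1 h2 C (x k)"
      using assms(1) by (rule accept_imp_sufficient_decrease)
    finally show ?thesis .
  qed
  then have "decseq (\<lambda>k. Fobj f g h1 h2 C (x k))"
    by (rule decseq_SucI)
  then have "Fobj f g h1 h2 C (x k) \<le> Fobj f g h1 h2 C (x 0)"
    by (rule decseqD) simp
  with \<open>x 0 \<in> domF f g h1 h2 C\<close> show ?thesis
    unfolding domF_def by (auto intro: order.strict_trans1)
qed

lemma sufficient_decrease_convergent:
  fixes a :: "nat \<Rightarrow> real" and x :: "nat \<Rightarrow> 'a::real_normed_vector"
  assumes decrease: "\<And>k. a (Suc k) + \<sigma> / 2 * (norm (x (Suc k) - x k))\<^sup>2 \<le> a k"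
    and "\<sigma> > 0" and "bdd_below (range a)"
  shows "convergent a" and "(\<lambda>k. norm (x (Suc k) - x k)) \<longlonglongrightarrow> 0"
proof -
  have gap: "(norm (x (Suc k) - x k))\<^sup>2 \<le> 2 / \<sigma> * (a k - a (Suc k))" for k
  proof -
    have "\<sigma> * (norm (x (Suc k) - x k))\<^sup>2 \<le> 2 * (a k - a (Suc k))"
      using decrease[of k] by simp
    then show ?thesis
      using \<open>\<sigma> > 0\<close> by (simp add: field_simps)
  qed
  have "a (Suc k) \<le> a k" for k
  proof -
    have "0 \<le> 2 / \<sigma> * (a k - a (Suc k))"
      using gap[of k] by (meson order_trans zero_le_power2)
    then show ?thesis
      using \<open>\<sigma> > 0\<close> by (auto simp: zero_le_divide_iff)
  qed
  then have "decseq a"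
    by (rule decseq_SucI)
  moreover obtain B where "\<forall>k. B \<le> a k"
    using \<open>bdd_below (range a)\<close> by (meson bdd_below.E rangeI)
  ultimately obtain L where L: "a \<longlonglongrightarrow> L"
    using decseq_convergent by blast
  then show "convergent a"
    by (auto simp: convergent_def)
  have "(\<lambda>k. 2 / \<sigma> * (a k - a (Suc k))) \<longlonglongrightarrow> 2 / \<sigma> * (L - L)"
    by (intro tendsto_intros L LIMSEQ_Suc)
  then have upper: "(\<lambda>k. 2 / \<sigma> * (a k - a (Suc k))) \<longlonglongrightarrow> 0"
    by simp
  have "(\<lambda>k. (norm (x (Suc k) - x k))\<^sup>2) \<longlonglongrightarrow> 0"
  proof (rule tendsto_sandwich[of "\<lambda>_. 0" _ _ "\<lambda>k. 2 / \<sigma> * (a k - a (Suc k))"])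
    show "\<forall>\<^sub>F k in sequentially. (norm (x (Suc k) - x k))\<^sup>2 \<le> 2 / \<sigma> * (a k - a (Suc k))"
      by (rule always_eventually, rule allI, rule gap)
  qed (fact upper | simp)+
  from tendsto_real_sqrt[OF this] show "(\<lambda>k. norm (x (Suc k) - x k)) \<longlonglongrightarrow> 0"
    by simp
qed

lemma bounded_subdiff:
  fixes h :: "'a::euclidean_space \<Rightarrow> real"
  assumes "convex_on UNIV h" and "bounded S"
  shows "bounded (\<Union>x\<in>S. subdiff h x)"
proof -
  obtain R where R: "\<And>x. x \<in> S \<Longrightarrow> norm x \<le> R"
    using \<open>bounded S\<close> by (auto simp: bounded_iff)
  have "continuous_on UNIV h"
    using assms(1) by (simp add: convex_on_continuous)
  then have "compact (h ` cball 0 (R + 1))"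
    by (rule compact_continuous_image[OF continuous_on_subset]) auto
  then obtain K where K: "\<And>y. norm y \<le> R + 1 \<Longrightarrow> \<bar>h y\<bar> \<le> K"
    by (fastforce dest!: compact_imp_bounded simp: bounded_iff)
  have "norm z \<le> 2 * K" if "x \<in> S" "z \<in> subdiff h x" for x z
  proof (cases "z = 0")
    case True
    then show ?thesis
      using K[of x] R[OF \<open>x \<in> S\<close>] by simp
  next
    case False
    \<comment> \<open>a unit step along z raises h by at least norm z\<close>
    define y where "y = x + (1 / norm z) *\<^sub>R z"
    have "norm y \<le> R + 1"
      using R[OF \<open>x \<in> S\<close>] norm_triangle_ineq[of x "(1 / norm z) *\<^sub>R z"] False
      by (simp add: y_def)
    moreover have "inner z (y - x) = norm z"
      using False by (simp add: y_def power2_norm_eq_inner[symmetric] power2_eq_square)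
    moreover have "h y \<ge> h x + inner z (y - x)"
      using \<open>z \<in> subdiff h x\<close> by (simp add: subdiff_def)
    ultimately show ?thesis
      using K[of x] K[of y] R[OF \<open>x \<in> S\<close>] by simp
  qed
  then show ?thesis
    by (auto simp: bounded_iff)
qed

theorem corollary4p1:
  fixes f g h1 h2 :: "real ^ 'n \<Rightarrow> real"
    and gg gh1 :: "real ^ 'n \<Rightarrow> real ^ 'n"
    and C :: "(real ^ 'n) set"
    and \<alpha>l \<alpha>h \<sigma> r :: real
    and x z :: "nat \<Rightarrow> real ^ 'n"
    and c :: "nat \<Rightarrow> real"
    and \<alpha>t :: "nat \<Rightarrow> real" and j :: "nat \<Rightarrow> nat"
  assumes f_nonneg: "\<And>x. f x \<ge> 0"
    and g_nonneg: "\<And>x. g x \<ge> 0"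
    and C_closed: "closed C" and C_convex: "convex C"
    and C_Omega: "C \<inter> Omega g \<noteq> {}"
    and f_convex: "convex_on UNIV f"
    and g_grad: "\<And>x. (g has_derivative (\<lambda>v. inner (gg x) v)) (at x)"
    and gg_lip: "loc_lipschitz gg"
    and h1_grad: "\<And>x. (h1 has_derivative (\<lambda>v. inner (gh1 x) v)) (at x)"
    and gh1_lip: "loc_lipschitz gh1"
    and h2_convex: "convex_on UNIV h2"
    and params: "0 < \<alpha>l" "\<alpha>l < \<alpha>h" "\<sigma> > 0" "0 < r" "r < 1"
    and x0: "x 0 \<in> domF f g h1 h2 C"
    and X0_compact: "compact {y \<in> domF f g h1 h2 C. Fobj f g h1 h2 C y \<le> Fobj f g h1 h2 C (x 0)}"
    and step1_c: "\<And>k. c k = f (x k) / g (x k)"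
    and step1_z: "\<And>k. z k \<in> subdiff h2 (x k)"
    and step1_alpha: "\<And>k. \<alpha>l \<le> \<alpha>t k \<and> \<alpha>t k \<le> \<alpha>h"
    and step2_accept: "\<And>k. x (Suc k) \<in> trial f C gh1 gg (c k) (x k) (z k) (\<alpha>t k * r ^ j k)
                           \<and> accept f g h1 h2 C \<sigma> (x k) (z k) (x (Suc k))"
    and step2_reject: "\<And>k i. i < j k \<Longrightarrow>
            \<exists>xh \<in> trial f C gh1 gg (c k) (x k) (z k) (\<alpha>t k * r ^ i).
               \<not> accept f g h1 h2 C \<sigma> (x k) (z k) xh"
  shows "bounded (range (\<lambda>k. (x k, z k, c k)))
         \<and> (\<exists>L::real. (\<lambda>k. Fobj f g h1 h2 C (x k)) \<longlonglongrightarrow> ereal L)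
         \<and> (\<lambda>k. norm (x (Suc k) - x k)) \<longlonglongrightarrow> 0"
proof -
  let ?F = "Fobj f g h1 h2 C" and ?Fval = "Fval f g h1 h2"
  define X0 where "X0 = {y \<in> domF f g h1 h2 C. ?F y \<le> ?F (x 0)}"
  have X0: "compact X0" and X0_dom: "X0 \<subseteq> domF f g h1 h2 C"
    using X0_compact by (auto simp: X0_def)
  have x_X0: "x k \<in> X0" for k
    unfolding X0_def using step2_accept params(3) x0 by (intro accepted_iterates_in_sublevel) auto
  have F_x: "?F (x k) = ereal (?Fval (x k))" for k
    using x_X0 X0_dom by (meson Fobj_eq_Fval subsetD)
  have f_cont: "continuous_on X0 f" and h2_cont: "continuous_on X0 h2"
    using f_convex h2_convex by (auto intro: continuous_on_subset convex_on_continuous)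
  have g_cont: "continuous_on X0 g" and h1_cont: "continuous_on X0 h1"
    using has_derivative_continuous[OF g_grad] has_derivative_continuous[OF h1_grad]
    by (auto intro: continuous_at_imp_continuous_on)
  have bdd_Fval: "bdd_below (range (\<lambda>k. ?Fval (x k)))"
    using bounded_Fval_image[OF X0 X0_dom f_cont g_cont h1_cont h2_cont] x_X0
    by (auto intro: bounded_imp_bdd_below elim!: bounded_subset)
  have "bounded ((\<lambda>y. f y / g y) ` X0)"
    using X0 X0_dom f_cont g_cont by (auto simp: domF_eq Omega_def
        intro!: compact_imp_bounded compact_continuous_image continuous_intros)
  then have bdd_c: "bounded (range c)"
    using x_X0 step1_c by (auto elim!: bounded_subset)
  have "?Fval (x (Suc k)) + \<sigma> / 2 * (norm (x (Suc k) - x k))\<^sup>2 \<le> ?Fval (x k)" for k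
    using accept_imp_sufficient_decrease[OF conjunct2[OF step2_accept[of k]]] by (simp add: F_x)
  note conv = sufficient_decrease_convergent[OF this params(3) bdd_Fval]
  then obtain L where "(\<lambda>k. ?F (x k)) \<longlonglongrightarrow> ereal L"
    by (auto simp: convergent_def F_x)
  moreover have bdd_x: "bounded (range x)"
    using compact_imp_bounded[OF X0] x_X0 by (blast intro: bounded_subset)
  moreover have "bounded (range z)"
    using bounded_subdiff[OF h2_convex bdd_x] step1_z by (blast intro: bounded_subset)
  ultimately show ?thesis
    using conv(2) bounded_Times[OF bdd_x bounded_Times[OF _ bdd_c]]
    by (blast intro: bounded_subset)
qed

end
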